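(* Let $q=2^\ell$, $r\in[q-1]$, and $0\le a,b\le q-1$. The monomial $x^ay^b$ is $(\Phi,q-r)^*$-good if and only if for all integers $i,j\ge0$ with $i\le_2 b$ and $j\le_2 b-i$ we have $(2i+j+a)\ \mathrm{mod}^*\ q< q-r$.
   Context: $\Phi$ is the set of all polynomials $\phi(x)=\alpha x^2+\beta x+\gamma$ with $\alpha,\beta,\gamma\in\mathbb F_q$. For $f\in\mathbb F_q[x,y]$ and $\phi\in\Phi$, $f|_\phi$ denotes the reduction of $f(x,\phi(x))$ modulo $x^q-x$ (a polynomial of degree $\le q-1$). A polynomial (in particular a monomial) $f$ is $(\Phi,q-r)^*$-good if $\deg f|_\phi<q-r$ for all $\phi\in\Phi$, and bad otherwise. For nonnegative integers $a,b$ with binary digits $a_1,a_2,\dots$ and $b_1,b_2,\dots$, $a\le_2 b$ means $a_i\le b_i$ for all $i$. For $a\ge0$: $a\ \mathrm{mod}^*\ q=a$ if $a\le q-1$; $=q-1$ if $a\ne0$ and $(q-1)\mid a$; otherwise $a\bmod (q-1)$. *)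

theory Defs
  imports "HOL-Computational_Algebra.Polynomial" "HOL-Library.Cardinality"
begin

text \<open>Reduction of f(x,phi(x)) for the monomial f = x^a y^b and
  phi(x) = alpha x^2 + beta x + gamma, modulo x^q - x, where q = |F_q|.\<close>
definition mono_restrict :: "nat \<Rightarrow> nat \<Rightarrow> 'a::{field,finite} \<Rightarrow> 'a \<Rightarrow> 'a \<Rightarrow> 'a poly" where
  "mono_restrict a b \<alpha> \<beta> \<gamma> =
     (monom 1 a * [:\<gamma>, \<beta>, \<alpha>:] ^ b) mod (monom 1 CARD('a) - monom 1 1)"

definition mono_good :: "'a::{field,finite} itself \<Rightarrow> nat \<Rightarrow> nat \<Rightarrow> nat \<Rightarrow> bool" where
  "mono_good _ r a b =
     (\<forall>\<alpha> \<beta> \<gamma> :: 'a. degree (mono_restrict a b \<alpha> \<beta> \<gamma>) < CARD('a) - r)"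

definition bin_le :: "nat \<Rightarrow> nat \<Rightarrow> bool" where
  "bin_le a b = (\<forall>k. (a div 2 ^ k) mod 2 \<le> (b div 2 ^ k) mod 2)"

definition modstar :: "nat \<Rightarrow> nat \<Rightarrow> nat" where
  "modstar a q = (if a \<le> q - 1 then a
                  else if a \<noteq> 0 \<and> (q - 1) dvd a then q - 1
                  else a mod (q - 1))"

end

theory Submission
  imports Defs "HOL-Library.Z2" "HOL-Library.Disjoint_Sets"
begin

text \<open>In characteristic 2 squaring is additive, so expanding \<open>(u + v + w)^b\<close> one
  binary digit of \<open>b\<close> at a time leaves exactly the monomials \<open>u^i v^j w^(b-i-j)\<close>
  with \<open>i \<le>\<^sub>2 b\<close> and \<open>j \<le>\<^sub>2 b - i\<close>, each with coefficient 1.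
  As \<open>x^n mod (x^q - x) = x^(n mod* q)\<close>, the coefficient of \<open>x^e\<close> in \<open>f|\<^sub>\<phi>\<close>
  is the sum of \<open>\<alpha>^i \<beta>^j \<gamma>^(b-i-j)\<close> over the pairs with \<open>(2i + j + a) mod* q = e\<close>.
  All exponents are below \<open>q\<close>, so at \<open>\<gamma> = 1\<close> this polynomial in \<open>\<alpha>, \<beta>\<close>
  vanishes on all of \<open>F\<^sub>q\<close> only if there is no such pair: a nonzero
  univariate polynomial of degree below \<open>q\<close> has a non-root, first in \<open>\<beta>\<close>,
  then in \<open>\<alpha>\<close>.\<close>

lemma bin_le_div2_iff: "bin_le i b \<longleftrightarrow> i mod 2 \<le> b mod 2 \<and> bin_le (i div 2) (b div 2)"
proof -
  have "n div 2 div 2 ^ k = n div 2 ^ Suc k" for n k :: nat by (simp add: div_mult2_eq)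
  then show ?thesis unfolding bin_le_def by (metis div_by_1 not0_implies_Suc power_0)
qed

lemma bin_le_imp_le: "bin_le i b \<Longrightarrow> i \<le> b"
proof (induction i arbitrary: b rule: less_induct)
  case (less i)
  show ?case
  proof (cases "i = 0")
    case False
    have "i mod 2 \<le> b mod 2" "bin_le (i div 2) (b div 2)"
      using less.prems bin_le_div2_iff by blast+
    moreover have "i div 2 \<le> b div 2"
      using less.IH[of "i div 2" "b div 2"] calculation(2) False by simp
    ultimately show ?thesis using div_mult_mod_eq[of i 2] div_mult_mod_eq[of b 2] by linarith
  qed simp
qed

lemma bin_le_double_add_iff:
  assumes "x < 2" "y < 2"
  shows "bin_le (2 * i + x) (2 * b + y) \<longleftrightarrow> x \<le> y \<and> bin_le i b"
  using assms by (subst bin_le_div2_iff) simp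

definition trinomial_support :: "nat \<Rightarrow> (nat \<times> nat) set" where
  "trinomial_support b = {(i, j). bin_le i b \<and> bin_le j (b - i)}"

lemma trinomial_support_bound: "(i, j) \<in> trinomial_support b \<Longrightarrow> i + j \<le> b"
  unfolding trinomial_support_def by (auto dest!: bin_le_imp_le)

lemma finite_trinomial_support: "finite (trinomial_support b)"
proof (rule finite_subset)
  show "trinomial_support b \<subseteq> {..b} \<times> {..b}" using trinomial_support_bound by fastforce
qed simp

lemma mem_trinomial_support_iff:
  "(i, j) \<in> trinomial_support b \<longleftrightarrow> bin_le i b \<and> bin_le j (b - i)"
  by (simp add: trinomial_support_def)

lemma double_add_mem_trinomial_support_iff:
  assumes "x < 2" "y < 2" "z < 2"
  shows "(2 * i + x, 2 * j + y) \<in> trinomial_support (2 * b + z) \<longleftrightarrow>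
    x + y \<le> z \<and> (i, j) \<in> trinomial_support b"
proof (cases "x \<le> z \<and> bin_le i b")
  case True
  then have "2 * b + z - (2 * i + x) = 2 * (b - i) + (z - x)" using bin_le_imp_le by fastforce
  then have "bin_le (2 * j + y) (2 * b + z - (2 * i + x)) \<longleftrightarrow> x + y \<le> z \<and> bin_le j (b - i)"
    using bin_le_double_add_iff[of y "z - x" j "b - i"] assms True by auto
  moreover have "bin_le (2 * i + x) (2 * b + z)" using True assms bin_le_double_add_iff by blast
  ultimately show ?thesis using True unfolding mem_trinomial_support_iff by blast
next
  case False
  then have "\<not> bin_le (2 * i + x) (2 * b + z)" using assms bin_le_double_add_iff by blast
  then show ?thesis using False unfolding mem_trinomial_support_iff by auto
qed

lemma trinomial_support_double_add:
  assumes "z < 2"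
  shows "trinomial_support (2 * b + z) =
    (\<lambda>((i, j), (x, y)). (2 * i + x, 2 * j + y)) ` (trinomial_support b \<times> {(x, y). x + y \<le> z})"
    (is "_ = ?g ` ?S")
proof
  show "trinomial_support (2 * b + z) \<subseteq> ?g ` ?S"
  proof clarify
    fix i j assume ij: "(i, j) \<in> trinomial_support (2 * b + z)"
    have "((i div 2, j div 2), (i mod 2, j mod 2)) \<in> ?S"
      using ij double_add_mem_trinomial_support_iff[of "i mod 2" "j mod 2" z "i div 2" "j div 2" b] assms
      by simp
    then show "(i, j) \<in> ?g ` ?S" by (rule rev_image_eqI) simp
  qed
qed (use assms double_add_mem_trinomial_support_iff in auto)

lemma double_add_eq_double_add_iff:
  fixes i x i' x' :: nat
  assumes "x < 2" "x' < 2"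
  shows "2 * i + x = 2 * i' + x' \<longleftrightarrow> i = i' \<and> x = x'"
  using assms by presburger

lemma sum_trinomial_support_double_add:
  assumes "z < 2"
  shows "(\<Sum>p\<in>trinomial_support (2 * b + z). f p) =
    (\<Sum>(i, j)\<in>trinomial_support b. \<Sum>(x, y)\<in>{(x, y). x + y \<le> z}. f (2 * i + x, 2 * j + y))"
proof -
  have inj: "inj_on (\<lambda>((i, j), (x, y)). (2 * i + x, 2 * j + y)) (trinomial_support b \<times> {(x, y). x + y \<le> z})"
    using assms by (auto simp: inj_on_def double_add_eq_double_add_iff)
  show ?thesis
    unfolding trinomial_support_double_add[OF assms] sum.reindex[OF inj]
    by (simp add: sum.cartesian_product split_def)
qed

lemma power2_sum_char2:
  fixes f :: "'b \<Rightarrow> 'a::comm_ring_1"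
  assumes "(2::'a) = 0"
  shows "(sum f A)^2 = (\<Sum>x\<in>A. (f x)^2)"
proof (induction A rule: infinite_finite_induct)
  case (insert x F)
  have "(f x + sum f F)^2 = (f x)^2 + (sum f F)^2 + 2 * (f x * sum f F)"
    by (simp add: power2_eq_square algebra_simps)
  then show ?case using insert assms by simp
qed auto

lemma power_trinomial_less_2:
  fixes u v w :: "'a::comm_semiring_1"
  assumes "z < 2"
  shows "(u + v + w)^z = (\<Sum>(x, y)\<in>{(x, y). x + y \<le> z}. u^x * v^y * w^(z - x - y))"
proof (cases "z = 0")
  case True
  then have "{(x, y). x + y \<le> z} = {(0, 0)}" by auto
  then show ?thesis using True by simp
next
  case False
  then have "z = 1" using assms by simp
  moreover have "{(x, y). x + y \<le> z} = {(0, 0), (1, 0), (0, 1)}" using \<open>z = 1\<close> by auto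
  ultimately show ?thesis by (simp add: algebra_simps)
qed

lemma trinomial_monomial_square_mult:
  fixes u v w :: "'a::comm_semiring_1"
  assumes "i + j \<le> c" "x + y \<le> z"
  shows "(u^i * v^j * w^(c - i - j))^2 * (u^x * v^y * w^(z - x - y)) =
    u^(2 * i + x) * v^(2 * j + y) * w^(2 * c + z - (2 * i + x) - (2 * j + y))"
proof -
  have "2 * c + z - (2 * i + x) - (2 * j + y) = (c - i - j) * 2 + (z - x - y)" using assms by simp
  then have "w^(2 * c + z - (2 * i + x) - (2 * j + y)) = (w^(c - i - j))^2 * w^(z - x - y)"
    by (metis power_add power_mult)
  moreover have "u^(2 * i + x) = (u^i)^2 * u^x" "v^(2 * j + y) = (v^j)^2 * v^y"
    by (simp_all add: power_add power_mult mult.commute)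
  ultimately show ?thesis by (simp add: power_mult_distrib algebra_simps)
qed

lemma power_trinomial_char2:
  fixes u v w :: "'a::comm_ring_1"
  assumes char2: "(2::'a) = 0"
  shows "(u + v + w)^b = (\<Sum>(i, j)\<in>trinomial_support b. u^i * v^j * w^(b - i - j))"
proof (induction b rule: less_induct)
  case (less b)
  define term_of where "term_of n = (\<lambda>(i, j). u^i * v^j * w^(n - i - j))" for n
  show ?case
  proof (cases "b = 0")
    case True
    have "(0, 0) \<in> trinomial_support 0" by (simp add: trinomial_support_def bin_le_def)
    then have "trinomial_support 0 = {(0, 0)}" by (auto dest: trinomial_support_bound)
    then show ?thesis using True by simp
  next
    case False
    define c z where "c = b div 2" and "z = b mod 2"
    have b: "b = 2 * c + z" and z: "z < 2" by (simp_all add: c_def z_def)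
    define B where "B = {(x :: nat, y :: nat). x + y \<le> z}"
    have IH: "(u + v + w)^c = (\<Sum>p\<in>trinomial_support c. term_of c p)"
      using less.IH[of c] False by (simp add: c_def term_of_def)
    have low: "(u + v + w)^z = (\<Sum>p\<in>B. term_of z p)"
      using power_trinomial_less_2[OF z] by (simp add: B_def term_of_def)
    have "(u + v + w)^b = ((u + v + w)^c)^2 * (u + v + w)^z"
      by (simp add: b power_add power_mult mult.commute)
    also have "\<dots> = (\<Sum>p\<in>trinomial_support c. (term_of c p)^2) * (\<Sum>p\<in>B. term_of z p)"
      by (simp only: IH low power2_sum_char2[OF char2])
    also have "\<dots> = (\<Sum>(i, j)\<in>trinomial_support c. \<Sum>(x, y)\<in>B. term_of b (2 * i + x, 2 * j + y))"
      unfolding sum_product split_def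
    proof (intro sum.cong refl)
      fix p q assume "p \<in> trinomial_support c" "q \<in> B"
      then have "fst p + snd p \<le> c" "fst q + snd q \<le> z"
        using trinomial_support_bound[of "fst p" "snd p" c] by (auto simp: B_def)
      then show "(term_of c p)^2 * term_of z q = term_of b (2 * fst p + fst q, 2 * snd p + snd q)"
        unfolding term_of_def b split_def fst_conv snd_conv by (rule trinomial_monomial_square_mult)
    qed
    also have "\<dots> = (\<Sum>p\<in>trinomial_support b. term_of b p)"
      unfolding b B_def by (rule sum_trinomial_support_double_add[OF z, symmetric])
    finally show ?thesis by (simp add: term_of_def)
  qed
qed
lemma two_eq_zero_if_card_power_of_two:
  assumes card: "CARD('a::{field,finite}) = 2 ^ l"
  shows "(2::'a) = 0"
proof (rule ccontr)
  assume two: "(2::'a) \<noteq> 0"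
  \<comment> \<open>Then negation pairs off the nonzero elements, so there is an even number of them.\<close>
  let ?N = "UNIV - {0::'a}"
  have "-x \<noteq> x" if "x \<noteq> 0" for x :: 'a
    using two that by (metis mult_2 mult_eq_0_iff neg_eq_iff_add_eq_0)
  then have "(\<Sum>x\<in>?N. (1::bit)) = 0"
    by (intro sum_involution_eq_0[where h = uminus]) auto
  then have "even (card ?N)" using even_of_nat[where ?'a = bit, of "card ?N"] by simp
  moreover have "card ?N + 1 = 2 ^ l" using card by (simp add: card_Diff_singleton)
  moreover have "2 \<le> CARD('a)" using card_mono[of UNIV "{0, 1::'a}"] by simp
  then have "l \<noteq> 0" using card by (metis power_0 numeral_le_one_iff semiring_norm(69))
  ultimately show False by simp
qed

lemma modstar_diff:
  assumes "q \<ge> 2" "n \<ge> q"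
  shows "modstar n q = modstar (n - (q - 1)) q"
proof -
  define p m where "p = q - 1" and "m = n - (q - 1)"
  have n: "n = m + p" and "m \<ge> 1" "p \<ge> 1" using assms by (simp_all add: m_def p_def)
  have "modstar n q = (if p dvd n then p else n mod p)"
    using assms by (simp add: modstar_def p_def)
  also have "\<dots> = (if p dvd m then p else m mod p)" by (simp add: n)
  also have "\<dots> = modstar m q"
    using \<open>m \<ge> 1\<close> by (cases "m < p") (auto simp: modstar_def p_def dest: dvd_imp_le)
  finally show ?thesis by (simp add: m_def)
qed

lemma poly_mod_sum_left:
  fixes f :: "'b \<Rightarrow> 'a::field poly"
  shows "sum f A mod d = (\<Sum>x\<in>A. f x mod d)"
  by (induction A rule: infinite_finite_induct) (auto simp: poly_mod_add_left)

lemma degree_x_power_minus_x: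
  assumes "q \<ge> 2"
  shows "degree (monom (1::'a::field) q - monom 1 1) = q"
proof (rule antisym)
  show "degree (monom (1::'a) q - monom 1 1) \<le> q"
    by (rule degree_diff_le) (use assms in \<open>auto simp: degree_monom_eq\<close>)
  have "coeff (monom (1::'a) q - monom 1 1) q \<noteq> 0" using assms by simp
  then show "q \<le> degree (monom (1::'a) q - monom 1 1)" by (rule le_degree)
qed

lemma monom_mod_x_power_minus_x:
  assumes q: "q \<ge> 2"
  shows "monom (c::'a::field) n mod (monom 1 q - monom 1 1) = monom c (modstar n q)"
proof (induction n rule: less_induct)
  case (less n)
  let ?d = "monom (1::'a) q - monom 1 1"
  show ?case
  proof (cases "n \<le> q - 1")
    case True
    then have "degree (monom c n) < degree ?d"
      using q degree_monom_le[of c n] degree_x_power_minus_x[OF q, where ?'a='a] by simp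
    then show ?thesis using True by (simp add: mod_poly_less modstar_def)
  next
    case False
    have "Suc (n - q) = n - (q - 1)" "n - q + q = n" using False q by auto
    then have "monom c n = monom c (n - (q - 1)) + monom c (n - q) * ?d"
      by (simp add: right_diff_distrib mult_monom)
    then have "monom c n mod ?d = monom c (n - (q - 1)) mod ?d"
      by (metis mod_mult_self1)
    also have "\<dots> = monom c (modstar n q)"
      using less.IH[of "n - (q - 1)"] modstar_diff[OF q] False q by simp
    finally show ?thesis .
  qed
qed

lemma mono_restrict_eq_sum:
  fixes \<alpha> \<beta> \<gamma> :: "'a::{field,finite}"
  assumes q: "CARD('a) \<ge> 2" and char2: "(2::'a) = 0"
  shows "mono_restrict a b \<alpha> \<beta> \<gamma> =
    (\<Sum>(i, j)\<in>trinomial_support b. monom (\<alpha>^i * \<beta>^j * \<gamma>^(b - i - j)) (modstar (2 * i + j + a) CARD('a)))"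
proof -
  have "[:\<gamma>, \<beta>, \<alpha>:] = monom \<alpha> 2 + monom \<beta> 1 + [:\<gamma>:]"
    by (auto simp: poly_eq_iff coeff_monom coeff_pCons split: nat.split)
  moreover have "(2::'a poly) = 0" using char2 by (simp add: numeral_poly)
  ultimately have "monom 1 a * [:\<gamma>, \<beta>, \<alpha>:] ^ b =
      (\<Sum>(i, j)\<in>trinomial_support b. monom 1 a * (monom \<alpha> 2 ^ i * monom \<beta> 1 ^ j * [:\<gamma>:] ^ (b - i - j)))"
    by (simp add: power_trinomial_char2 sum_distrib_left case_prod_beta)
  also have "\<dots> = (\<Sum>(i, j)\<in>trinomial_support b. monom (\<alpha>^i * \<beta>^j * \<gamma>^(b - i - j)) (2 * i + j + a))"
    by (simp add: monom_power mult_monom ac_simps flip: monom_0)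
  finally have eq: "monom 1 a * [:\<gamma>, \<beta>, \<alpha>:] ^ b =
      (\<Sum>(i, j)\<in>trinomial_support b. monom (\<alpha>^i * \<beta>^j * \<gamma>^(b - i - j)) (2 * i + j + a))" .
  show ?thesis
    unfolding mono_restrict_def eq poly_mod_sum_left
    by (simp only: split_def monom_mod_x_power_minus_x[OF q])
qed

lemma coeff_mono_restrict:
  fixes \<alpha> \<beta> \<gamma> :: "'a::{field,finite}"
  assumes "CARD('a) \<ge> 2" and "(2::'a) = 0"
  shows "coeff (mono_restrict a b \<alpha> \<beta> \<gamma>) e =
    (\<Sum>(i, j)\<in>{p\<in>trinomial_support b. modstar (2 * fst p + snd p + a) CARD('a) = e}.
       \<alpha>^i * \<beta>^j * \<gamma>^(b - i - j))"
  unfolding mono_restrict_eq_sum[OF assms] coeff_sum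
  by (simp add: sum.inter_filter finite_trinomial_support coeff_monom case_prod_beta eq_commute)

lemma degree_less_iff_coeff_eq_0:
  assumes "N \<ge> 1"
  shows "degree p < N \<longleftrightarrow> (\<forall>n\<ge>N. coeff p n = 0)"
proof
  assume "\<forall>n\<ge>N. coeff p n = 0"
  then have "degree p \<le> N - 1" by (intro degree_le) (use assms in auto)
  then show "degree p < N" using assms by simp
qed (auto intro: coeff_eq_0)

lemma exists_poly_nonzero:
  fixes p :: "'a::{field,finite} poly"
  assumes "p \<noteq> 0" "degree p < CARD('a)"
  shows "\<exists>x. poly p x \<noteq> 0"
proof (rule ccontr)
  assume "\<nexists>x. poly p x \<noteq> 0"
  then have "CARD('a) \<le> degree p" using card_poly_roots_bound[OF assms(1)] by simp
  then show False using assms(2) by simp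
qed

lemma exists_bivariate_sum_nonzero:
  fixes T :: "(nat \<times> nat) set"
  assumes fin: "finite T" and mem: "(i0, j0) \<in> T"
    and bound: "\<And>i j. (i, j) \<in> T \<Longrightarrow> i < CARD('a::{field,finite}) \<and> j < CARD('a)"
  shows "\<exists>\<alpha> \<beta> :: 'a. (\<Sum>(i, j)\<in>T. \<alpha>^i * \<beta>^j) \<noteq> 0"
proof -
  have card: "1 \<le> CARD('a)" by (simp add: Suc_le_eq)
  define p :: "'a poly" where "p = (\<Sum>(i, j)\<in>T. if i = i0 then monom 1 j else 0)"
  have coeff_p: "coeff p n = (if (i0, n) \<in> T then 1 else 0)" for n
  proof -
    have "coeff p n = (\<Sum>x\<in>T. if x = (i0, n) then 1 else 0)"
      unfolding p_def coeff_sum by (rule sum.cong) (auto simp: coeff_monom split: if_splits)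
    then show ?thesis using fin by (simp add: sum.delta)
  qed
  have "degree p < CARD('a)"
    unfolding degree_less_iff_coeff_eq_0[OF card] coeff_p using bound by fastforce
  moreover have "p \<noteq> 0" using coeff_p[of j0] mem by auto
  ultimately obtain \<beta> where \<beta>: "poly p \<beta> \<noteq> 0" using exists_poly_nonzero by blast
  define p' :: "'a poly" where "p' = (\<Sum>(i, j)\<in>T. monom (\<beta>^j) i)"
  have coeff_p': "coeff p' n = (\<Sum>(i, j)\<in>T. if i = n then \<beta>^j else 0)" for n
    unfolding p'_def coeff_sum by (rule sum.cong) (auto simp: coeff_monom)
  have "coeff p' i0 = poly p \<beta>"
    unfolding coeff_p' p_def poly_sum by (rule sum.cong) (auto simp: poly_monom)
  then have "p' \<noteq> 0" using \<beta> by auto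
  moreover have "degree p' < CARD('a)"
    unfolding degree_less_iff_coeff_eq_0[OF card] coeff_p'
    by (intro allI impI sum.neutral) (use bound in fastforce)
  ultimately obtain \<alpha> where "poly p' \<alpha> \<noteq> 0" using exists_poly_nonzero by blast
  moreover have "poly p' \<alpha> = (\<Sum>(i, j)\<in>T. \<alpha>^i * \<beta>^j)"
    unfolding p'_def poly_sum by (rule sum.cong) (auto simp: poly_monom mult.commute)
  ultimately show ?thesis by metis
qed

lemma coeff_mono_restrict_eq_0_iff:
  assumes q: "CARD('a::{field,finite}) \<ge> 2" and char2: "(2::'a) = 0" and b: "b < CARD('a)"
  shows "(\<forall>\<alpha> \<beta> \<gamma> :: 'a. coeff (mono_restrict a b \<alpha> \<beta> \<gamma>) e = 0) \<longleftrightarrow>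
    (\<forall>(i, j)\<in>trinomial_support b. modstar (2 * i + j + a) CARD('a) \<noteq> e)"
proof
  assume vanish: "\<forall>\<alpha> \<beta> \<gamma> :: 'a. coeff (mono_restrict a b \<alpha> \<beta> \<gamma>) e = 0"
  show "\<forall>(i, j)\<in>trinomial_support b. modstar (2 * i + j + a) CARD('a) \<noteq> e"
  proof (rule ccontr)
    assume "\<not> ?thesis"
    then obtain i j where ij: "(i, j) \<in> trinomial_support b" "modstar (2 * i + j + a) CARD('a) = e"
      by blast
    define S where "S = {p\<in>trinomial_support b. modstar (2 * fst p + snd p + a) CARD('a) = e}"
    have "finite S" "(i, j) \<in> S" unfolding S_def using finite_trinomial_support ij by auto
    moreover have "i' < CARD('a) \<and> j' < CARD('a)" if "(i', j') \<in> S" for i' j'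
      using that trinomial_support_bound[of i' j' b] b by (auto simp: S_def)
    ultimately obtain \<alpha> \<beta> :: 'a where "(\<Sum>(i, j)\<in>S. \<alpha>^i * \<beta>^j) \<noteq> 0"
      using exists_bivariate_sum_nonzero by blast
    then show False using vanish[rule_format, of \<alpha> \<beta> 1] coeff_mono_restrict[OF q char2, of a b \<alpha> \<beta> 1]
      by (simp add: S_def)
  qed
next
  assume "\<forall>(i, j)\<in>trinomial_support b. modstar (2 * i + j + a) CARD('a) \<noteq> e"
  then have none: "{p\<in>trinomial_support b. modstar (2 * fst p + snd p + a) CARD('a) = e} = {}"
    by auto
  show "\<forall>\<alpha> \<beta> \<gamma> :: 'a. coeff (mono_restrict a b \<alpha> \<beta> \<gamma>) e = 0"
    unfolding coeff_mono_restrict[OF q char2] none by simp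
qed

lemma all_ge_neq_iff_less: "(\<forall>e\<ge>N. m \<noteq> e) \<longleftrightarrow> m < (N::nat)"
  using not_le by blast

theorem mainTheorem3:
  fixes l r a b :: nat
  assumes q: "CARD('a::{field,finite}) = 2 ^ l"
    and r: "1 \<le> r" "r \<le> CARD('a) - 1"
    and ab: "a \<le> CARD('a) - 1" "b \<le> CARD('a) - 1"
  shows "mono_good TYPE('a) r a b \<longleftrightarrow>
    (\<forall>i j. bin_le i b \<longrightarrow> bin_le j (b - i) \<longrightarrow>
       modstar (2 * i + j + a) CARD('a) < CARD('a) - r)"
proof -
  have card: "CARD('a) \<ge> 2" and qr: "1 \<le> CARD('a) - r" and b: "b < CARD('a)"
    using r ab by linarith+
  have char2: "(2::'a) = 0" using two_eq_zero_if_card_power_of_two[OF \<open>CARD('a) = 2 ^ l\<close>] .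
  have "mono_good TYPE('a) r a b \<longleftrightarrow>
      (\<forall>e\<ge>CARD('a) - r. \<forall>\<alpha> \<beta> \<gamma> :: 'a. coeff (mono_restrict a b \<alpha> \<beta> \<gamma>) e = 0)"
    unfolding mono_good_def degree_less_iff_coeff_eq_0[OF qr] by blast
  also have "\<dots> \<longleftrightarrow>
      (\<forall>e\<ge>CARD('a) - r. \<forall>(i, j)\<in>trinomial_support b. modstar (2 * i + j + a) CARD('a) \<noteq> e)"
    using coeff_mono_restrict_eq_0_iff[OF card char2 b] by simp
  also have "\<dots> \<longleftrightarrow>
      (\<forall>(i, j)\<in>trinomial_support b. \<forall>e\<ge>CARD('a) - r. modstar (2 * i + j + a) CARD('a) \<noteq> e)"
    by blast
  also have "\<dots> \<longleftrightarrow> (\<forall>(i, j)\<in>trinomial_support b. modstar (2 * i + j + a) CARD('a) < CARD('a) - r)"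
    by (simp add: all_ge_neq_iff_less)
  also have "\<dots> \<longleftrightarrow> (\<forall>i j. bin_le i b \<longrightarrow> bin_le j (b - i) \<longrightarrow>
       modstar (2 * i + j + a) CARD('a) < CARD('a) - r)"
    unfolding trinomial_support_def by blast
  finally show ?thesis .
qed

end
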